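(* Let $\Lambda$ be a left cancellative small category which is (isomorphic to) a subcategory of a groupoid. Then the groupoid $G_2(\Lambda)$ is Hausdorff.
   Context: A left cancellative small category (LCSC) is a small category $\Lambda$ such that $\alpha\beta=\alpha\gamma$ implies $\beta=\gamma$. Composition $\alpha\beta$ is defined when $s(\alpha)=r(\beta)$; $\Lambda^0$ is the set of objects (identity morphisms); $v\Lambda=\{\alpha:r(\alpha)=v\}$; $\alpha\Lambda=\{\alpha\beta:r(\beta)=s(\alpha)\}$. For $\alpha\in\Lambda$, $\tau^\alpha(\beta)=\alpha\beta$ on $s(\alpha)\Lambda$ and $\sigma^\alpha:\alpha\Lambda\to s(\alpha)\Lambda$ is its inverse. A zigzag is a tuple $\zeta=(\alpha_1,\beta_1,\dots,\alpha_n,\beta_n)$ with $r(\alpha_i)=r(\beta_i)$ and $s(\alpha_{i+1})=s(\beta_i)$; $\mathcal Z$ is the set of zigzags, $s(\zeta)=s(\beta_n)$, $r(\zeta)=s(\alpha_1)$, $\mathcal Zv=\{\zeta:s(\zeta)=v\}$, $\overline\zeta=(\beta_n,\alpha_n,\dots,\beta_1,\alpha_1)$, composable zigzags concatenate as tuples. The zigzag map $\varphi_\zeta=\sigma^{\alpha_1}\circ\tau^{\beta_1}\circ\cdots\circ\sigma^{\alpha_n}\circ\tau^{\beta_n}$ (partial injective map) has domain $A(\zeta)\subseteq s(\zeta)\Lambda$ and range $A(\overline\zeta)$. $\mathcal D^{(0)}_v$ is the set of nonempty $A(\zeta)$, $\zeta\in\mathcal Zv$; $\mathcal A_v$ is the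 ring of subsets of $v\Lambda$ generated by $\mathcal D^{(0)}_v$. $X_v$ is the set of ultrafilters of $\mathcal A_v$ ($\mathcal U_x$ denoting the ultrafilter $x$), with compact open basic sets $\widehat E=\{x:E\in\mathcal U_x\}$, $E\in\mathcal A_v$; $X=\bigsqcup_vX_v$, $r(x)=v$ for $x\in X_v$. For $x\in\widehat{A(\zeta)}$, $\Phi_\zeta(x)$ is the ultrafilter of $\mathcal A_{r(\zeta)}$ generated by $\{\varphi_\zeta(E\cap A(\zeta)):E\in\mathcal U_x\}$. On $\mathcal Z*X=\{(\zeta,x):s(\zeta)=r(x),\ x\in\widehat{A(\zeta)}\}$, $(\zeta,x)\sim_2(\zeta',x')$ iff $x=x'$ and $\varphi_\zeta|_E=\varphi_{\zeta'}|_E$ for some $E\in\mathcal U_x$. $G_2(\Lambda)=(\mathcal Z*X)/\sim_2$, with classes $[\zeta,x]$, product $[\zeta,\Phi_{\zeta'}(x)][\zeta',x]=[\zeta\zeta',x]$, inverse $[\zeta,x]^{-1}=[\overline\zeta,\Phi_\zeta(x)]$, and topology generated by the basis $[\zeta,E]=\{[\zeta,x]:x\in\widehat E\}$, $E\in\mathcal A_{s(\zeta)}$, $E\subseteq A(\zeta)$; it is an ample étale groupoid. *)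

theory Defs
  imports "HOL-Analysis.Analysis"
begin

text \<open>A small category, given by its set of morphisms (objects are identified
with identity morphisms), source, range and composition.
cmp a b denotes the composite a b, defined when src a = rng b.\<close>

record 'a cat =
  Mor :: "'a set"
  src :: "'a \<Rightarrow> 'a"
  rng :: "'a \<Rightarrow> 'a"
  cmp :: "'a \<Rightarrow> 'a \<Rightarrow> 'a"

definition objs :: "('a, 'm) cat_scheme \<Rightarrow> 'a set" where
  "objs C = src C ` Mor C"

definition is_category :: "('a, 'm) cat_scheme \<Rightarrow> bool" where
  "is_category C \<longleftrightarrow>
     (\<forall>a\<in>Mor C. src C a \<in> Mor C \<and> rng C a \<in> Mor C) \<and>
     (\<forall>a\<in>Mor C. src C (src C a) = src C a \<and> rng C (src C a) = src C a
                 \<and> src C (rng C a) = rng C a \<and> rng C (rng C a) = rng C a) \<and>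
     (\<forall>a\<in>Mor C. \<forall>b\<in>Mor C. src C a = rng C b \<longrightarrow>
         cmp C a b \<in> Mor C \<and> src C (cmp C a b) = src C b \<and> rng C (cmp C a b) = rng C a) \<and>
     (\<forall>a\<in>Mor C. \<forall>b\<in>Mor C. \<forall>d\<in>Mor C. src C a = rng C b \<longrightarrow> src C b = rng C d \<longrightarrow>
         cmp C (cmp C a b) d = cmp C a (cmp C b d)) \<and>
     (\<forall>a\<in>Mor C. cmp C (rng C a) a = a \<and> cmp C a (src C a) = a)"

definition left_cancellative :: "('a, 'm) cat_scheme \<Rightarrow> bool" where
  "left_cancellative C \<longleftrightarrow>
     (\<forall>a\<in>Mor C. \<forall>b\<in>Mor C. \<forall>d\<in>Mor C.
        src C a = rng C b \<longrightarrow> src C a = rng C d \<longrightarrow> cmp C a b = cmp C a d \<longrightarrow> b = d)"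

definition is_LCSC :: "('a, 'm) cat_scheme \<Rightarrow> bool" where
  "is_LCSC C \<longleftrightarrow> is_category C \<and> left_cancellative C"

definition is_groupoid :: "('b, 'm) cat_scheme \<Rightarrow> bool" where
  "is_groupoid G \<longleftrightarrow> is_category G \<and>
     (\<forall>g\<in>Mor G. \<exists>h\<in>Mor G. src G h = rng G g \<and> rng G h = src G g \<and>
        cmp G g h = rng G g \<and> cmp G h g = src G g)"

text \<open>An injective functor; its image is a subcategory isomorphic to the source.\<close>
definition injective_functor :: "('a, 'm) cat_scheme \<Rightarrow> ('b, 'n) cat_scheme \<Rightarrow> ('a \<Rightarrow> 'b) \<Rightarrow> bool" where
  "injective_functor C D F \<longleftrightarrow>
     F ` Mor C \<subseteq> Mor D \<and> inj_on F (Mor C) \<and>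
     (\<forall>a\<in>Mor C. src D (F a) = F (src C a) \<and> rng D (F a) = F (rng C a)) \<and>
     (\<forall>a\<in>Mor C. \<forall>b\<in>Mor C. src C a = rng C b \<longrightarrow> F (cmp C a b) = cmp D (F a) (F b))"

text \<open>A zigzag (a1,b1,...,an,bn), n \<ge> 1, is the list [(a1,b1),...,(an,bn)].\<close>

definition vMor :: "('a, 'm) cat_scheme \<Rightarrow> 'a \<Rightarrow> 'a set" where
  "vMor C v = {a \<in> Mor C. rng C a = v}"

fun zz_links :: "('a, 'm) cat_scheme \<Rightarrow> ('a \<times> 'a) list \<Rightarrow> bool" where
  "zz_links C [] = True"
| "zz_links C [p] = True"
| "zz_links C (p # q # rest) = (src C (fst q) = src C (snd p) \<and> zz_links C (q # rest))"

definition is_zigzag :: "('a, 'm) cat_scheme \<Rightarrow> ('a \<times> 'a) list \<Rightarrow> bool" where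
  "is_zigzag C z \<longleftrightarrow> z \<noteq> [] \<and>
     (\<forall>(a, b)\<in>set z. a \<in> Mor C \<and> b \<in> Mor C \<and> rng C a = rng C b) \<and> zz_links C z"

definition zz_s :: "('a, 'm) cat_scheme \<Rightarrow> ('a \<times> 'a) list \<Rightarrow> 'a" where
  "zz_s C z = src C (snd (last z))"

definition zz_r :: "('a, 'm) cat_scheme \<Rightarrow> ('a \<times> 'a) list \<Rightarrow> 'a" where
  "zz_r C z = src C (fst (hd z))"

definition zz_step :: "('a, 'm) cat_scheme \<Rightarrow> 'a \<Rightarrow> 'a \<Rightarrow> 'a \<Rightarrow> 'a option" where
  "zz_step C a b y =
     (if \<exists>d\<in>Mor C. rng C d = src C a \<and> cmp C a d = cmp C b y
      then Some (THE d. d \<in> Mor C \<and> rng C d = src C a \<and> cmp C a d = cmp C b y)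
      else None)"

fun zz_fold :: "('a, 'm) cat_scheme \<Rightarrow> ('a \<times> 'a) list \<Rightarrow> 'a \<Rightarrow> 'a option" where
  "zz_fold C [] x = Some x"
| "zz_fold C ((a, b) # rest) x =
     (case zz_fold C rest x of None \<Rightarrow> None | Some y \<Rightarrow> zz_step C a b y)"

definition zz_map :: "('a, 'm) cat_scheme \<Rightarrow> ('a \<times> 'a) list \<Rightarrow> 'a \<Rightarrow> 'a option" where
  "zz_map C z x = (if x \<in> vMor C (zz_s C z) then zz_fold C z x else None)"

definition zz_dom :: "('a, 'm) cat_scheme \<Rightarrow> ('a \<times> 'a) list \<Rightarrow> 'a set" where
  "zz_dom C z = {x. zz_map C z x \<noteq> None}"

definition D0 :: "('a, 'm) cat_scheme \<Rightarrow> 'a \<Rightarrow> 'a set set" where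
  "D0 C v = {zz_dom C z | z. is_zigzag C z \<and> zz_s C z = v \<and> zz_dom C z \<noteq> {}}"

definition gen_ring :: "'a set set \<Rightarrow> 'a set set" where
  "gen_ring D = \<Inter>{M. D \<subseteq> M \<and> {} \<in> M \<and> (\<forall>E\<in>M. \<forall>F\<in>M. E \<union> F \<in> M \<and> E - F \<in> M)}"

definition Av :: "('a, 'm) cat_scheme \<Rightarrow> 'a \<Rightarrow> 'a set set" where
  "Av C v = gen_ring (D0 C v)"

definition is_filter_of :: "'a set set \<Rightarrow> 'a set set \<Rightarrow> bool" where
  "is_filter_of R U \<longleftrightarrow> U \<subseteq> R \<and> U \<noteq> {} \<and> {} \<notin> U \<and>
     (\<forall>E\<in>U. \<forall>F\<in>R. E \<subseteq> F \<longrightarrow> F \<in> U) \<and> (\<forall>E\<in>U. \<forall>F\<in>U. E \<inter> F \<in> U)"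

definition is_ultrafilter_of :: "'a set set \<Rightarrow> 'a set set \<Rightarrow> bool" where
  "is_ultrafilter_of R U \<longleftrightarrow> is_filter_of R U \<and>
     (\<forall>U'. is_filter_of R U' \<and> U \<subseteq> U' \<longrightarrow> U' = U)"

text \<open>Points of X are pairs (v, U) with v an object and U an ultrafilter of A_v,
so that X is the disjoint union of the X_v and r(v, U) = v.\<close>
definition Xsp :: "('a, 'm) cat_scheme \<Rightarrow> ('a \<times> 'a set set) set" where
  "Xsp C = {(v, U). v \<in> objs C \<and> is_ultrafilter_of (Av C v) U}"

definition hat :: "('a, 'm) cat_scheme \<Rightarrow> 'a \<Rightarrow> 'a set \<Rightarrow> ('a \<times> 'a set set) set" where
  "hat C v E = {x \<in> Xsp C. fst x = v \<and> E \<in> snd x}"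

definition ZX :: "('a, 'm) cat_scheme \<Rightarrow> (('a \<times> 'a) list \<times> ('a \<times> 'a set set)) set" where
  "ZX C = {(z, x). is_zigzag C z \<and> x \<in> Xsp C \<and> fst x = zz_s C z \<and> zz_dom C z \<in> snd x}"

definition sim2 :: "('a, 'm) cat_scheme \<Rightarrow> ((('a \<times> 'a) list \<times> ('a \<times> 'a set set)) \<times>
                                                (('a \<times> 'a) list \<times> ('a \<times> 'a set set))) set" where
  "sim2 C = {((z, x), (z', x')). (z, x) \<in> ZX C \<and> (z', x') \<in> ZX C \<and> x = x' \<and>
               (\<exists>E\<in>snd x. \<forall>y\<in>E. zz_map C z y = zz_map C z' y)}"

definition G2 :: "('a, 'm) cat_scheme \<Rightarrow> (('a \<times> 'a) list \<times> ('a \<times> 'a set set)) set set" where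
  "G2 C = ZX C // sim2 C"

definition G2_class :: "('a, 'm) cat_scheme \<Rightarrow> ('a \<times> 'a) list \<Rightarrow> ('a \<times> 'a set set)
                          \<Rightarrow> (('a \<times> 'a) list \<times> ('a \<times> 'a set set)) set" where
  "G2_class C z x = sim2 C `` {(z, x)}"

definition G2_basic :: "('a, 'm) cat_scheme \<Rightarrow> ('a \<times> 'a) list \<Rightarrow> 'a set
                          \<Rightarrow> (('a \<times> 'a) list \<times> ('a \<times> 'a set set)) set set" where
  "G2_basic C z E = {G2_class C z x | x. x \<in> hat C (zz_s C z) E}"

definition G2_basis :: "('a, 'm) cat_scheme \<Rightarrow> (('a \<times> 'a) list \<times> ('a \<times> 'a set set)) set set set" where
  "G2_basis C = {G2_basic C z E | z E. is_zigzag C z \<and> E \<in> Av C (zz_s C z) \<and> E \<subseteq> zz_dom C z}"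

definition G2_topology :: "('a, 'm) cat_scheme \<Rightarrow> (('a \<times> 'a) list \<times> ('a \<times> 'a set set)) set topology" where
  "G2_topology C = topology_generated_by (G2_basis C)"

end

theory Submission
  imports Defs
begin

text \<open>Through the injective functor F into the groupoid G, every zigzag map acts by left
multiplication by one groupoid element: F (\<phi>\<zeta> y) = g\<zeta> F y, where g\<zeta> is the alternating product
of the F \<beta>i and the inverses of the F \<alpha>i. Right cancellation in G then shows that two zigzag maps
with the same source which agree at one point agree on the whole intersection of their domains.
So two distinct germs [\<zeta>, x], [\<zeta>', x] over the same point x are separated by the basic sets over
A(\<zeta>) \<inter> A(\<zeta>'), while germs over distinct points of X are separated by disjoint members of the
ultrafilters (or by their vertices).\<close>

lemma is_categoryD:
  assumes "is_category C"
  shows cat_cmp_mor: "a \<in> Mor C \<Longrightarrow> b \<in> Mor C \<Longrightarrow> src C a = rng C b \<Longrightarrow> cmp C a b \<in> Mor C"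
    and cat_src_cmp: "a \<in> Mor C \<Longrightarrow> b \<in> Mor C \<Longrightarrow> src C a = rng C b \<Longrightarrow> src C (cmp C a b) = src C b"
    and cat_rng_cmp: "a \<in> Mor C \<Longrightarrow> b \<in> Mor C \<Longrightarrow> src C a = rng C b \<Longrightarrow> rng C (cmp C a b) = rng C a"
    and cat_assoc: "a \<in> Mor C \<Longrightarrow> b \<in> Mor C \<Longrightarrow> d \<in> Mor C \<Longrightarrow> src C a = rng C b \<Longrightarrow>
         src C b = rng C d \<Longrightarrow> cmp C (cmp C a b) d = cmp C a (cmp C b d)"
    and cat_lid: "a \<in> Mor C \<Longrightarrow> cmp C (rng C a) a = a"
    and cat_rid: "a \<in> Mor C \<Longrightarrow> cmp C a (src C a) = a"
  using assms unfolding is_category_def by blast+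

lemma groupoid_inverse:
  assumes "is_groupoid G" "g \<in> Mor G"
  obtains h where "h \<in> Mor G" "src G h = rng G g" "rng G h = src G g"
    "cmp G g h = rng G g" "cmp G h g = src G g"
  using assms unfolding is_groupoid_def by blast

lemma groupoid_right_cancel:
  assumes G: "is_groupoid G" and mor: "g \<in> Mor G" "g' \<in> Mor G" "u \<in> Mor G"
    and src: "src G g = rng G u" "src G g' = rng G u" and eq: "cmp G g u = cmp G g' u"
  shows "g = g'"
proof -
  have C: "is_category G" using G unfolding is_groupoid_def by blast
  obtain w where w: "w \<in> Mor G" "src G w = rng G u" "rng G w = src G u" "cmp G u w = rng G u"
    using groupoid_inverse[OF G mor(3)] by blast
  have "g = cmp G g (cmp G u w)" using src w cat_rid[OF C mor(1)] by simp
  also have "\<dots> = cmp G (cmp G g' u) w" using cat_assoc[OF C mor(1,3) w(1)] src w eq by simp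
  also have "\<dots> = g'" using cat_assoc[OF C mor(2,3) w(1)] src w cat_rid[OF C mor(2)] by simp
  finally show ?thesis .
qed

lemma injective_functorD:
  assumes "injective_functor C D F"
  shows functor_mor: "a \<in> Mor C \<Longrightarrow> F a \<in> Mor D"
    and functor_src: "a \<in> Mor C \<Longrightarrow> src D (F a) = F (src C a)"
    and functor_rng: "a \<in> Mor C \<Longrightarrow> rng D (F a) = F (rng C a)"
    and functor_cmp: "a \<in> Mor C \<Longrightarrow> b \<in> Mor C \<Longrightarrow> src C a = rng C b \<Longrightarrow>
         F (cmp C a b) = cmp D (F a) (F b)"
    and functor_inj: "inj_on F (Mor C)"
  using assms unfolding injective_functor_def by blast+

section \<open>Zigzag maps act by groupoid elements\<close>

definition acts_by ::
    "('a, 'm) cat_scheme \<Rightarrow> ('b, 'n) cat_scheme \<Rightarrow> ('a \<Rightarrow> 'b) \<Rightarrow> ('a \<Rightarrow> 'a option) \<Rightarrow> 'a \<Rightarrow> 'a \<Rightarrow> 'b \<Rightarrow> bool"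
  where
  "acts_by L G F f u w g \<longleftrightarrow> g \<in> Mor G \<and> src G g = F u \<and> rng G g = F w \<and>
     (\<forall>y d. y \<in> vMor L u \<longrightarrow> f y = Some d \<longrightarrow> d \<in> vMor L w \<and> F d = cmp G g (F y))"

lemma zz_step_spec:
  assumes L: "is_LCSC L" and a: "a \<in> Mor L" and step: "zz_step L a b y = Some d"
  shows "d \<in> Mor L \<and> rng L d = src L a \<and> cmp L a d = cmp L b y"
proof -
  let ?P = "\<lambda>d. d \<in> Mor L \<and> rng L d = src L a \<and> cmp L a d = cmp L b y"
  have ex: "\<exists>d. ?P d" using step unfolding zz_step_def by (auto split: if_splits)
  moreover have "d1 = d2" if "?P d1" "?P d2" for d1 d2
    using L a that unfolding is_LCSC_def left_cancellative_def by metis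
  ultimately have "\<exists>!d. ?P d" by blast
  moreover have "d = (THE d. ?P d)" using step ex unfolding zz_step_def by (auto split: if_splits)
  ultimately show ?thesis using theI'[of ?P] by simp
qed

lemma zz_step_acts_by:
  assumes L: "is_LCSC L" and G: "is_groupoid G" and F: "injective_functor L G F"
    and ab: "a \<in> Mor L" "b \<in> Mor L" "rng L a = rng L b"
  shows "\<exists>g. acts_by L G F (zz_step L a b) (src L b) (src L a) g"
proof -
  have CG: "is_category G" using G unfolding is_groupoid_def by blast
  have Fa: "F a \<in> Mor G" and Fb: "F b \<in> Mor G" using functor_mor[OF F] ab by auto
  obtain h where h: "h \<in> Mor G" "src G h = rng G (F a)" "rng G h = src G (F a)"
    "cmp G h (F a) = src G (F a)" using groupoid_inverse[OF G Fa] by blast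
  have hFb: "src G h = rng G (F b)" using h functor_rng[OF F] ab by simp
  define g where "g = cmp G h (F b)"
  have g: "g \<in> Mor G" "src G g = F (src L b)" "rng G g = F (src L a)"
    unfolding g_def using cat_cmp_mor[OF CG h(1) Fb hFb] cat_src_cmp[OF CG h(1) Fb hFb]
      cat_rng_cmp[OF CG h(1) Fb hFb] h functor_src[OF F] ab by auto
  have "d \<in> vMor L (src L a) \<and> F d = cmp G g (F y)"
    if y: "y \<in> vMor L (src L b)" and step: "zz_step L a b y = Some d" for y d
  proof -
    have y': "y \<in> Mor L" "src L b = rng L y" using y unfolding vMor_def by auto
    have d: "d \<in> Mor L" "rng L d = src L a" "cmp L a d = cmp L b y"
      using zz_step_spec[OF L ab(1) step] by auto
    have Fy: "F y \<in> Mor G" "src G (F b) = rng G (F y)"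
      using functor_mor[OF F] functor_src[OF F] functor_rng[OF F] y' ab by auto
    have Fd: "F d \<in> Mor G" "src G (F a) = rng G (F d)"
      using functor_mor[OF F] functor_src[OF F] functor_rng[OF F] d ab by auto
    have "F d = cmp G (cmp G h (F a)) (F d)" using h Fd cat_lid[OF CG Fd(1)] by simp
    also have "\<dots> = cmp G h (F (cmp L a d))"
      using cat_assoc[OF CG h(1) Fa Fd(1)] h Fd functor_cmp[OF F ab(1) d(1)] d by simp
    also have "\<dots> = cmp G h (cmp G (F b) (F y))" using d functor_cmp[OF F ab(2) y'(1)] y' by simp
    also have "\<dots> = cmp G g (F y)" unfolding g_def using cat_assoc[OF CG h(1) Fb Fy(1) hFb Fy(2)] ..
    finally show ?thesis using d unfolding vMor_def by simp
  qed
  then show ?thesis using g unfolding acts_by_def by blast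
qed

lemma acts_by_bind:
  assumes G: "is_groupoid G" and F: "injective_functor L G F"
    and f: "acts_by L G F f u w g" and f': "acts_by L G F f' w t g'"
  shows "acts_by L G F (\<lambda>y. Option.bind (f y) f') u t (cmp G g' g)"
proof -
  have CG: "is_category G" using G unfolding is_groupoid_def by blast
  have g: "g \<in> Mor G" "src G g = F u" "rng G g = F w" and g': "g' \<in> Mor G" "src G g' = F w" "rng G g' = F t"
    using f f' unfolding acts_by_def by auto
  have gg': "src G g' = rng G g" using g g' by simp
  have "d \<in> vMor L t \<and> F d = cmp G (cmp G g' g) (F y)"
    if y: "y \<in> vMor L u" and d: "Option.bind (f y) f' = Some d" for y d
  proof -
    obtain e where e: "f y = Some e" "f' e = Some d" using d by (cases "f y") auto
    have e': "e \<in> vMor L w" "F e = cmp G g (F y)" using f y e(1) unfolding acts_by_def by blast+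
    have d': "d \<in> vMor L t" "F d = cmp G g' (F e)" using f' e'(1) e(2) unfolding acts_by_def by blast+
    have Fy: "F y \<in> Mor G" "src G g = rng G (F y)"
      using y functor_mor[OF F] functor_rng[OF F] g unfolding vMor_def by auto
    show ?thesis using d' e' cat_assoc[OF CG g'(1) g(1) Fy(1) gg' Fy(2)] by simp
  qed
  then show ?thesis unfolding acts_by_def
    using g g' cat_cmp_mor[OF CG g'(1) g(1) gg'] cat_src_cmp[OF CG g'(1) g(1) gg'] cat_rng_cmp[OF CG g'(1) g(1) gg']
    by auto
qed

lemma zz_fold_Cons: "zz_fold C ((a, b) # z) = (\<lambda>y. Option.bind (zz_fold C z y) (zz_step C a b))"
  by (rule ext) (simp split: option.split)

lemma is_zigzag_Cons:
  assumes "is_zigzag C (p # z)" "z \<noteq> []"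
  shows "is_zigzag C z" "src C (fst (hd z)) = src C (snd p)"
  using assms by (cases z; auto simp: is_zigzag_def)+

lemma zigzag_acts_by:
  assumes L: "is_LCSC L" and G: "is_groupoid G" and F: "injective_functor L G F"
    and z: "is_zigzag L z"
  shows "\<exists>g. acts_by L G F (zz_fold L z) (zz_s L z) (zz_r L z) g"
proof -
  have "z \<noteq> []" using z unfolding is_zigzag_def by simp
  then show ?thesis using z
  proof (induction z rule: list_nonempty_induct)
    case (single p)
    obtain a b where p: "p = (a, b)" by (cases p)
    have ab: "a \<in> Mor L" "b \<in> Mor L" "rng L a = rng L b" using single p unfolding is_zigzag_def by auto
    have "zz_fold L [p] = zz_step L a b" "zz_s L [p] = src L b" "zz_r L [p] = src L a"
      using p zz_fold_Cons[of L a b "[]"] by (simp_all add: zz_s_def zz_r_def)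
    then show ?case using zz_step_acts_by[OF L G F ab] by simp
  next
    case (cons p z)
    obtain a b where p: "p = (a, b)" by (cases p)
    have ab: "a \<in> Mor L" "b \<in> Mor L" "rng L a = rng L b"
      using cons.prems p unfolding is_zigzag_def by auto
    obtain g where g: "acts_by L G F (zz_fold L z) (zz_s L z) (zz_r L z) g"
      using cons.IH is_zigzag_Cons(1)[OF cons.prems cons.hyps] by blast
    have "zz_r L z = src L b" using is_zigzag_Cons(2)[OF cons.prems cons.hyps] p by (simp add: zz_r_def)
    then obtain g' where g': "acts_by L G F (zz_step L a b) (zz_r L z) (src L a) g'"
      using zz_step_acts_by[OF L G F ab] by metis
    have "zz_fold L (p # z) = (\<lambda>y. Option.bind (zz_fold L z y) (zz_step L a b))"
      "zz_s L (p # z) = zz_s L z" "zz_r L (p # z) = src L a"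
      using cons.hyps p zz_fold_Cons by (simp_all add: zz_s_def zz_r_def)
    then show ?case using acts_by_bind[OF G F g g'] by auto
  qed
qed

lemma acts_by_agree:
  assumes G: "is_groupoid G" and F: "injective_functor L G F"
    and f: "acts_by L G F f u t g" and f': "acts_by L G F f' u t' g'"
    and w: "w \<in> vMor L u" "f w = Some e" "f' w = Some e"
    and y: "y \<in> vMor L u" "f y = Some d" "f' y = Some d'"
  shows "d = d'"
proof -
  have Fw: "F w \<in> Mor G" "rng G (F w) = F u"
    using w(1) functor_mor[OF F] functor_rng[OF F] unfolding vMor_def by auto
  have "cmp G g (F w) = cmp G g' (F w)" using f f' w unfolding acts_by_def by metis
  then have "g = g'" using groupoid_right_cancel[OF G _ _ Fw(1)] f f' Fw(2) unfolding acts_by_def by metis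
  then have "F d = F d'" using f f' y unfolding acts_by_def by metis
  moreover have "d \<in> Mor L" "d' \<in> Mor L" using f f' y unfolding acts_by_def vMor_def by blast+
  ultimately show ?thesis using functor_inj[OF F] inj_onD by metis
qed

lemma zz_map_agree_on_common_dom:
  assumes L: "is_LCSC L" and G: "is_groupoid G" and F: "injective_functor L G F"
    and z: "is_zigzag L z" and z': "is_zigzag L z'" and s: "zz_s L z = zz_s L z'"
    and w: "w \<in> zz_dom L z \<inter> zz_dom L z'" and eq: "zz_map L z w = zz_map L z' w"
    and y: "y \<in> zz_dom L z \<inter> zz_dom L z'"
  shows "zz_map L z y = zz_map L z' y"
proof -
  obtain g g' where g: "acts_by L G F (zz_fold L z) (zz_s L z) (zz_r L z) g"
    and g': "acts_by L G F (zz_fold L z') (zz_s L z) (zz_r L z') g'"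
    using zigzag_acts_by[OF L G F z] zigzag_acts_by[OF L G F z'] s by metis
  have dom: "u \<in> vMor L (zz_s L z) \<and> zz_map L z u = zz_fold L z u \<and> zz_map L z' u = zz_fold L z' u
      \<and> zz_fold L z u \<noteq> None \<and> zz_fold L z' u \<noteq> None" if "u \<in> zz_dom L z \<inter> zz_dom L z'" for u
    using that s unfolding zz_dom_def zz_map_def by (auto split: if_splits)
  obtain e where "zz_fold L z w = Some e" "zz_fold L z' w = Some e" using dom[OF w] eq by auto
  moreover obtain d d' where "zz_fold L z y = Some d" "zz_fold L z' y = Some d'" using dom[OF y] by auto
  ultimately show ?thesis using acts_by_agree[OF G F g g'] dom[OF w] dom[OF y] by metis
qed

lemma gen_ring_base: "E \<in> D \<Longrightarrow> E \<in> gen_ring D"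
  unfolding gen_ring_def by blast

lemma gen_ring_Int: "E \<in> gen_ring D \<Longrightarrow> F \<in> gen_ring D \<Longrightarrow> E \<inter> F \<in> gen_ring D"
proof -
  assume "E \<in> gen_ring D" "F \<in> gen_ring D"
  then have "E - (E - F) \<in> gen_ring D" unfolding gen_ring_def by blast
  moreover have "E - (E - F) = E \<inter> F" by blast
  ultimately show ?thesis by simp
qed

lemma is_ultrafilter_ofD:
  assumes "is_ultrafilter_of R U"
  shows ultrafilter_subset: "U \<subseteq> R"
    and ultrafilter_nonempty: "U \<noteq> {}"
    and ultrafilter_empty: "{} \<notin> U"
    and ultrafilter_mono: "E \<in> U \<Longrightarrow> F \<in> R \<Longrightarrow> E \<subseteq> F \<Longrightarrow> F \<in> U"
    and ultrafilter_Int: "E \<in> U \<Longrightarrow> F \<in> U \<Longrightarrow> E \<inter> F \<in> U"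
    and ultrafilter_maximal: "is_filter_of R U' \<Longrightarrow> U \<subseteq> U' \<Longrightarrow> U' = U"
  using assms unfolding is_ultrafilter_of_def by (simp_all add: is_filter_of_def)

lemma ultrafilters_disjoint_members:
  assumes R: "\<And>E F. E \<in> R \<Longrightarrow> F \<in> R \<Longrightarrow> E \<inter> F \<in> R"
    and U: "is_ultrafilter_of R U" and U': "is_ultrafilter_of R U'" and ne: "U \<noteq> U'"
  shows "\<exists>E\<in>U. \<exists>E'\<in>U'. E \<inter> E' = {}"
proof (rule ccontr)
  assume meet: "\<not> ?thesis"
  have "is_filter_of R U'" using U' unfolding is_ultrafilter_of_def by simp
  then have "\<not> U \<subseteq> U'" using ultrafilter_maximal[OF U] ne by blast
  then obtain E where E: "E \<in> U" "E \<notin> U'" by blast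
  have ER: "E \<in> R" using E(1) ultrafilter_subset[OF U] by blast
  text \<open>The members of R above some E \<inter> F with F \<in> U' form a filter extending U' and containing E.\<close>
  define W where "W = {H \<in> R. \<exists>F\<in>U'. E \<inter> F \<subseteq> H}"
  have "is_filter_of R W"
    unfolding is_filter_of_def
  proof (intro conjI ballI impI)
    show "W \<subseteq> R" unfolding W_def by blast
    obtain F0 where "F0 \<in> U'" using ultrafilter_nonempty[OF U'] by blast
    then have "E \<inter> F0 \<in> W" using R ER ultrafilter_subset[OF U'] unfolding W_def by blast
    then show "W \<noteq> {}" by blast
    show "{} \<notin> W" using meet E(1) unfolding W_def by blast
  next
    fix H1 H2 assume "H1 \<in> W" "H2 \<in> R" "H1 \<subseteq> H2"
    then show "H2 \<in> W" unfolding W_def by blast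
  next
    fix H1 H2 assume "H1 \<in> W" "H2 \<in> W"
    then obtain F1 F2 where F: "F1 \<in> U'" "F2 \<in> U'" "E \<inter> F1 \<subseteq> H1" "E \<inter> F2 \<subseteq> H2"
      "H1 \<in> R" "H2 \<in> R" unfolding W_def by blast
    have "F1 \<inter> F2 \<in> U'" using ultrafilter_Int[OF U' F(1,2)] .
    moreover have "E \<inter> (F1 \<inter> F2) \<subseteq> H1 \<inter> H2" using F by blast
    ultimately show "H1 \<inter> H2 \<in> W" using R[OF F(5,6)] unfolding W_def by blast
  qed
  moreover have "U' \<subseteq> W" using ultrafilter_subset[OF U'] unfolding W_def by blast
  ultimately have "W = U'" by (rule ultrafilter_maximal[OF U'])
  moreover have "E \<in> W" using ultrafilter_nonempty[OF U'] ER unfolding W_def by blast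
  ultimately show False using E(2) by simp
qed

lemma Av_Int: "E \<in> Av L v \<Longrightarrow> F \<in> Av L v \<Longrightarrow> E \<inter> F \<in> Av L v"
  unfolding Av_def by (rule gen_ring_Int)

lemma zz_dom_in_Av: "is_zigzag L z \<Longrightarrow> zz_dom L z \<noteq> {} \<Longrightarrow> zz_dom L z \<in> Av L (zz_s L z)"
  unfolding Av_def D0_def by (rule gen_ring_base) blast

lemma Xsp_ultrafilter: "y \<in> Xsp L \<Longrightarrow> is_ultrafilter_of (Av L (fst y)) (snd y)"
  unfolding Xsp_def by auto

lemma ZXD:
  assumes "(z, x) \<in> ZX L"
  shows "is_zigzag L z" "x \<in> Xsp L" "fst x = zz_s L z" "zz_dom L z \<in> snd x"
    and "is_ultrafilter_of (Av L (zz_s L z)) (snd x)" "zz_dom L z \<in> Av L (zz_s L z)"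
proof -
  show z: "is_zigzag L z" "x \<in> Xsp L" "fst x = zz_s L z" "zz_dom L z \<in> snd x"
    using assms unfolding ZX_def by auto
  then show U: "is_ultrafilter_of (Av L (zz_s L z)) (snd x)" using Xsp_ultrafilter by metis
  show "zz_dom L z \<in> Av L (zz_s L z)" using ultrafilter_subset[OF U] z(4) by blast
qed

lemma ZX_if_hat:
  assumes z: "is_zigzag L z" and x: "x \<in> hat L (zz_s L z) E" and E: "E \<subseteq> zz_dom L z"
  shows "(z, x) \<in> ZX L"
proof -
  have x': "x \<in> Xsp L" "fst x = zz_s L z" "E \<in> snd x" using x unfolding hat_def by auto
  have U: "is_ultrafilter_of (Av L (zz_s L z)) (snd x)" using Xsp_ultrafilter[OF x'(1)] x'(2) by simp
  have "zz_dom L z \<noteq> {}" using ultrafilter_empty[OF U] x'(3) E by auto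
  then have "zz_dom L z \<in> snd x" using ultrafilter_mono[OF U x'(3)] zz_dom_in_Av[OF z] E by blast
  then show ?thesis unfolding ZX_def using z x' by auto
qed

lemma sim2_sym: "((z, x), (z', x')) \<in> sim2 L \<Longrightarrow> ((z', x'), (z, x)) \<in> sim2 L"
  unfolding sim2_def by (auto, metis)

lemma sim2_trans:
  assumes "((z1, x1), (z2, x2)) \<in> sim2 L" "((z2, x2), q) \<in> sim2 L"
  shows "((z1, x1), q) \<in> sim2 L"
proof -
  obtain z3 x3 where q: "q = (z3, x3)" by (cases q)
  have 1: "(z1, x1) \<in> ZX L \<and> (z2, x2) \<in> ZX L \<and> x1 = x2 \<and>
      (\<exists>E\<in>snd x1. \<forall>y\<in>E. zz_map L z1 y = zz_map L z2 y)"
    using assms(1) unfolding sim2_def by auto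
  have 2: "(z2, x2) \<in> ZX L \<and> (z3, x3) \<in> ZX L \<and> x2 = x3 \<and>
      (\<exists>E\<in>snd x2. \<forall>y\<in>E. zz_map L z2 y = zz_map L z3 y)"
    using assms(2) unfolding q sim2_def by auto
  obtain E1 E2 where E: "E1 \<in> snd x1" "E2 \<in> snd x1" "\<forall>y\<in>E1. zz_map L z1 y = zz_map L z2 y"
    "\<forall>y\<in>E2. zz_map L z2 y = zz_map L z3 y" using 1 2 by blast
  have zx: "(z1, x1) \<in> ZX L" "(z3, x1) \<in> ZX L" "x3 = x1" using 1 2 by auto
  have "E1 \<inter> E2 \<in> snd x1" using ultrafilter_Int[OF ZXD(5)[OF zx(1)] E(1,2)] .
  moreover have "\<forall>y\<in>E1 \<inter> E2. zz_map L z1 y = zz_map L z3 y" using E(3,4) by simp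
  ultimately show ?thesis unfolding q sim2_def using zx by auto
qed

lemma G2_class_eq:
  assumes "((z, x), (z', x')) \<in> sim2 L"
  shows "G2_class L z x = G2_class L z' x'"
  unfolding G2_class_def using sim2_trans[OF assms] sim2_trans[OF sim2_sym[OF assms]] by blast

lemma G2_basic_open:
  assumes "is_zigzag L z" "E \<in> Av L (zz_s L z)" "E \<subseteq> zz_dom L z"
  shows "openin (G2_topology L) (G2_basic L z E)"
proof -
  have "G2_basic L z E \<in> G2_basis L" using assms unfolding G2_basis_def by blast
  then show ?thesis unfolding G2_topology_def by (rule topology_generated_by_Basis)
qed

lemma G2_class_in_basic: "(z, x) \<in> ZX L \<Longrightarrow> E \<in> snd x \<Longrightarrow> G2_class L z x \<in> G2_basic L z E"
  unfolding G2_basic_def hat_def using ZXD by blast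

lemma G2_topspace:
  assumes "p \<in> topspace (G2_topology L)"
  obtains z x where "p = G2_class L z x" "(z, x) \<in> ZX L"
proof -
  obtain z E where zE: "is_zigzag L z" "E \<subseteq> zz_dom L z" "p \<in> G2_basic L z E"
    using assms unfolding G2_topology_def topology_generated_by_topspace G2_basis_def by blast
  then obtain x where "x \<in> hat L (zz_s L z) E" "p = G2_class L z x" unfolding G2_basic_def by blast
  then show thesis using that ZX_if_hat[OF zE(1) _ zE(2)] by blast
qed

lemma G2_basic_meet:
  assumes c: "c \<in> G2_basic L z E" "c \<in> G2_basic L z' E'"
    and z: "is_zigzag L z" "E \<subseteq> zz_dom L z"
  obtains y where "y \<in> hat L (zz_s L z) E" "y \<in> hat L (zz_s L z') E'" "((z', y), (z, y)) \<in> sim2 L"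
proof -
  obtain y where y: "c = G2_class L z y" "y \<in> hat L (zz_s L z) E" using c(1) unfolding G2_basic_def by blast
  obtain y' where y': "c = G2_class L z' y'" "y' \<in> hat L (zz_s L z') E'" using c(2) unfolding G2_basic_def by blast
  have "(z, y) \<in> G2_class L z y"
    using ZX_if_hat[OF z(1) y(2) z(2)] ZXD(4) unfolding G2_class_def sim2_def by blast
  then have "(z, y) \<in> G2_class L z' y'" using y(1) y'(1) by simp
  then have s: "((z', y'), (z, y)) \<in> sim2 L" unfolding G2_class_def by simp
  then have "y' = y" unfolding sim2_def by simp
  then show thesis using that y(2) y'(2) s by blast
qed

lemma G2_basic_disjoint:
  assumes z: "is_zigzag L z" "E \<subseteq> zz_dom L z"
    and sep: "zz_s L z \<noteq> zz_s L z' \<or> E \<inter> E' = {}"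
  shows "G2_basic L z E \<inter> G2_basic L z' E' = {}"
proof (rule ccontr)
  assume "G2_basic L z E \<inter> G2_basic L z' E' \<noteq> {}"
  then obtain c where "c \<in> G2_basic L z E" "c \<in> G2_basic L z' E'" by blast
  then obtain y where "y \<in> hat L (zz_s L z) E" "y \<in> hat L (zz_s L z') E'"
    using G2_basic_meet z by metis
  then have y: "y \<in> Xsp L" "fst y = zz_s L z" "fst y = zz_s L z'" "E \<in> snd y" "E' \<in> snd y"
    unfolding hat_def by auto
  have "E \<inter> E' \<in> snd y" using ultrafilter_Int[OF Xsp_ultrafilter[OF y(1)] y(4,5)] .
  then show False using sep y(2,3) ultrafilter_empty[OF Xsp_ultrafilter[OF y(1)]] by auto
qed

lemma G2_separate_distinct_points:
  assumes p: "(z, x) \<in> ZX L" and q: "(z', x') \<in> ZX L" and ne: "x \<noteq> x'"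
  obtains E E' where "E \<in> Av L (zz_s L z)" "E \<subseteq> zz_dom L z" "E \<in> snd x"
    "E' \<in> Av L (zz_s L z')" "E' \<subseteq> zz_dom L z'" "E' \<in> snd x'"
    "G2_basic L z E \<inter> G2_basic L z' E' = {}"
proof (cases "zz_s L z = zz_s L z'")
  case False
  then show thesis using that G2_basic_disjoint[OF ZXD(1)[OF p] order_refl] ZXD[OF p] ZXD[OF q] by blast
next
  case True
  have "snd x \<noteq> snd x'" using ne True ZXD(3)[OF p] ZXD(3)[OF q] by (simp add: prod_eq_iff)
  then obtain E0 E0' where E0: "E0 \<in> snd x" "E0' \<in> snd x'" "E0 \<inter> E0' = {}"
    using ultrafilters_disjoint_members[OF Av_Int ZXD(5)[OF p]] ZXD(5)[OF q] True by metis
  define E where "E = E0 \<inter> zz_dom L z"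
  define E' where "E' = E0' \<inter> zz_dom L z'"
  have E: "E \<in> snd x" "E' \<in> snd x'"
    unfolding E_def E'_def using ultrafilter_Int ZXD(4,5) p q E0(1,2) by blast+
  then have "E \<in> Av L (zz_s L z)" "E' \<in> Av L (zz_s L z')"
    using ultrafilter_subset ZXD(5) p q by blast+
  moreover have "G2_basic L z E \<inter> G2_basic L z' E' = {}"
    using G2_basic_disjoint[OF ZXD(1)[OF p]] E0(3) unfolding E_def E'_def by blast
  ultimately show thesis using that E unfolding E_def E'_def by blast
qed

lemma G2_separate_same_point:
  assumes L: "is_LCSC L" and G: "is_groupoid G" and F: "injective_functor L G F"
    and p: "(z, x) \<in> ZX L" and q: "(z', x) \<in> ZX L" and ne: "G2_class L z x \<noteq> G2_class L z' x"
  defines "E \<equiv> zz_dom L z \<inter> zz_dom L z'"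
  shows "E \<in> Av L (zz_s L z)" "E \<in> Av L (zz_s L z')" "E \<in> snd x"
    and "G2_basic L z E \<inter> G2_basic L z' E = {}"
proof -
  have s: "zz_s L z = zz_s L z'" using ZXD(3)[OF p] ZXD(3)[OF q] by simp
  show E: "E \<in> snd x" unfolding E_def using ultrafilter_Int[OF ZXD(5)[OF p] ZXD(4)[OF p] ZXD(4)[OF q]] .
  then show "E \<in> Av L (zz_s L z)" "E \<in> Av L (zz_s L z')"
    using ultrafilter_subset[OF ZXD(5)[OF p]] s by auto
  show "G2_basic L z E \<inter> G2_basic L z' E = {}"
  proof (rule ccontr)
    assume "G2_basic L z E \<inter> G2_basic L z' E \<noteq> {}"
    then obtain c where "c \<in> G2_basic L z E" "c \<in> G2_basic L z' E" by blast
    then obtain y where y: "y \<in> hat L (zz_s L z) E" "((z', y), (z, y)) \<in> sim2 L"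
      using G2_basic_meet ZXD(1)[OF p] unfolding E_def by (metis inf_le1)
    obtain E1 where E1: "E1 \<in> snd y" "\<forall>u\<in>E1. zz_map L z' u = zz_map L z u"
      using y(2) unfolding sim2_def by auto
    have "y \<in> Xsp L" "E \<in> snd y" using y(1) unfolding hat_def by auto
    then have "E1 \<inter> E \<noteq> {}"
      using ultrafilter_Int[OF Xsp_ultrafilter E1(1)] ultrafilter_empty[OF Xsp_ultrafilter] by metis
    then obtain w where w: "w \<in> E1" "w \<in> E" by blast
    have "\<forall>u\<in>E. zz_map L z u = zz_map L z' u"
      using zz_map_agree_on_common_dom[OF L G F ZXD(1)[OF p] ZXD(1)[OF q] s] w E1(2)
      unfolding E_def by metis
    then have "((z, x), (z', x)) \<in> sim2 L" unfolding sim2_def using p q E by blast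
    then show False using ne G2_class_eq by blast
  qed
qed

theorem mainTheorem7:
  fixes L :: "'a cat" and G :: "'b cat" and F :: "'a \<Rightarrow> 'b"
  assumes "is_LCSC L"
    and "is_groupoid G"
    and "injective_functor L G F"
  shows "Hausdorff_space (G2_topology L)"
  unfolding Hausdorff_space_def disjnt_def
proof (intro allI impI)
  fix p q assume pq: "p \<in> topspace (G2_topology L) \<and> q \<in> topspace (G2_topology L) \<and> p \<noteq> q"
  obtain z x z' x' where p: "p = G2_class L z x" "(z, x) \<in> ZX L"
    and q: "q = G2_class L z' x'" "(z', x') \<in> ZX L"
    using G2_topspace pq by metis
  obtain E E' where E: "E \<in> Av L (zz_s L z)" "E \<subseteq> zz_dom L z" "E \<in> snd x"
    and E': "E' \<in> Av L (zz_s L z')" "E' \<subseteq> zz_dom L z'" "E' \<in> snd x'"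
    and disj: "G2_basic L z E \<inter> G2_basic L z' E' = {}"
  proof (cases "x = x'")
    case True
    then show thesis
      using that G2_separate_same_point[OF assms p(2)] q pq p by (metis inf_le1 inf_le2)
  next
    case False
    then show thesis using that G2_separate_distinct_points[OF p(2) q(2)] by blast
  qed
  have "openin (G2_topology L) (G2_basic L z E)" "openin (G2_topology L) (G2_basic L z' E')"
    using G2_basic_open ZXD(1) p(2) q(2) E E' by blast+
  moreover have "p \<in> G2_basic L z E" "q \<in> G2_basic L z' E'"
    using G2_class_in_basic p q E(3) E'(3) by blast+
  ultimately show "\<exists>U V. openin (G2_topology L) U \<and> openin (G2_topology L) V \<and>
      p \<in> U \<and> q \<in> V \<and> U \<inter> V = {}"
    using disj by blast
qed

end
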